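(* Let $\lambda=\bar p/(1-\bar p)$, $\pi=(1+\lambda)\mu(I-D_pK)$ and $\mathbf r=\big(I-K+\frac{(\mathbf 1-\mathbf p)\mu D_{1-p}K}{1-\bar p}\big)^{-1}\mathbf p-\lambda\mathbf 1$. Then $\pi\cdot\mathbf r=0$.
   Context: Let $\mathcal R=\{1,\dots,N\}$ and let $K$ be a stochastic matrix on $\mathcal R$ whose Markov chain has a unique closed irreducible subset; let $\mu$ (row vector) be its unique stationary distribution. Fix $p:\mathcal R\to(0,1)$, $\mathbf p=(p(1),\dots,p(N))^t$, $\mathbf 1$ the all-ones column vector, $I$ the identity, $D_p$ the diagonal matrix with entries $p(i)$, $D_{1-p}=I-D_p$, $\bar p=\mu\cdot\mathbf p$. *)

theory Defs
  imports "HOL-Analysis.Analysis"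
begin

text \<open>States R = {1..N} are modelled by a finite index type 'n. Row vectors
(distributions) and column vectors are both elements of real^'n; a row vector
times a matrix is v v* A, a matrix times a column vector is A *v x.\<close>

definition stochastic_matrix :: "real^'n^'n \<Rightarrow> bool" where
  "stochastic_matrix K \<longleftrightarrow> (\<forall>i j. 0 \<le> K$i$j) \<and> (\<forall>i. (\<Sum>j\<in>UNIV. K$i$j) = 1)"

definition trans_step :: "real^'n^'n \<Rightarrow> 'n \<Rightarrow> 'n \<Rightarrow> bool" where
  "trans_step K i j \<longleftrightarrow> 0 < K$i$j"

definition closed_set :: "real^'n^'n \<Rightarrow> 'n set \<Rightarrow> bool" where
  "closed_set K C \<longleftrightarrow> C \<noteq> {} \<and> (\<forall>i\<in>C. \<forall>j. trans_step K i j \<longrightarrow> j \<in> C)"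

definition irreducible_set :: "real^'n^'n \<Rightarrow> 'n set \<Rightarrow> bool" where
  "irreducible_set K C \<longleftrightarrow> (\<forall>i\<in>C. \<forall>j\<in>C. (trans_step K)\<^sup>*\<^sup>* i j)"

definition closed_irreducible :: "real^'n^'n \<Rightarrow> 'n set \<Rightarrow> bool" where
  "closed_irreducible K C \<longleftrightarrow> closed_set K C \<and> irreducible_set K C"

definition stationary_distribution :: "real^'n^'n \<Rightarrow> real^'n \<Rightarrow> bool" where
  "stationary_distribution K \<mu> \<longleftrightarrow>
     (\<forall>i. 0 \<le> \<mu>$i) \<and> (\<Sum>i\<in>UNIV. \<mu>$i) = 1 \<and> \<mu> v* K = \<mu>"

definition diag_mat :: "real^'n \<Rightarrow> real^'n^'n" where
  "diag_mat v = (\<chi> i j. if i = j then v$i else 0)"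

definition outer_prod :: "real^'n \<Rightarrow> real^'n \<Rightarrow> real^'n^'n" where
  "outer_prod u v = (\<chi> i j. u$i * v$j)"

end

theory Submission imports Defs begin

text \<open>\<open>M\<close> is the rank-one perturbation \<open>I - K + u a\<close> of \<open>I - K\<close> with
\<open>u = (\<one> - p) / (1 - pbar)\<close> and \<open>a = \<mu> D\<^sub>1\<^sub>-\<^sub>p K\<close>. By the maximum principle, a unique closed
irreducible class leaves only the constants as \<open>K\<close>-harmonic vectors, and stationarity of
\<open>\<mu>\<close> gives \<open>\<mu> \<bullet> M x = (\<mu> \<bullet> u) (a \<bullet> x) = a \<bullet> x\<close>; together these make \<open>M\<close> invertible.
Stationarity also gives \<open>a = \<mu> (I - D\<^sub>p K)\<close>, so \<open>\<pi> = (1 + \<lambda>) a\<close>. Applying \<open>\<mu>\<close> to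
\<open>M y = p\<close> yields \<open>a \<bullet> y = pbar\<close>, while \<open>a \<bullet> \<one> = 1 - pbar\<close>; hence
\<open>\<pi> \<bullet> r = (1 + \<lambda>) (pbar - \<lambda> (1 - pbar)) = 0\<close>.\<close>

lemma closed_set_contains_closed_irreducible:
  fixes K :: "real^'n^'n"
  assumes "closed_set K S"
  shows "\<exists>C\<subseteq>S. closed_irreducible K C"
proof -
  define R where "R i = {j. (trans_step K)\<^sup>*\<^sup>* i j}" for i
  have R_subset: "R i \<subseteq> S" if "i \<in> S" for i
  proof
    fix j assume "j \<in> R i"
    hence "(trans_step K)\<^sup>*\<^sup>* i j" by (simp add: R_def)
    thus "j \<in> S" using that
      by (induction rule: rtranclp_induct) (use assms in \<open>auto simp: closed_set_def\<close>)
  qed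
  obtain i0 where "i0 \<in> S" using assms by (auto simp: closed_set_def)
  \<comment> \<open>a state of \<open>S\<close> with the fewest reachable states is reached back from all of them\<close>
  then obtain i where i: "i \<in> S" and i_min: "\<And>j. j \<in> S \<Longrightarrow> card (R i) \<le> card (R j)"
    using ex_has_least_nat[of "\<lambda>i. i \<in> S" i0 "\<lambda>i. card (R i)"] by blast
  have R_mono: "R j \<subseteq> R i" if "j \<in> R i" for j
    using that by (auto simp: R_def)
  have reaches_back: "i \<in> R j" if "j \<in> R i" for j
  proof -
    have "j \<in> S" using R_subset[OF i] that by blast
    hence "R j = R i" using i_min[of j] R_mono[OF that] by (simp add: card_seteq)
    thus ?thesis by (auto simp: R_def)
  qed
  have "closed_irreducible K (R i)"
    unfolding closed_irreducible_def closed_set_def irreducible_set_def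
  proof (intro conjI ballI allI impI)
    show "R i \<noteq> {}" by (auto simp: R_def)
  next
    fix j k assume "j \<in> R i" "trans_step K j k"
    thus "k \<in> R i" by (auto simp: R_def)
  next
    fix j k assume j: "j \<in> R i" and k: "k \<in> R i"
    have "(trans_step K)\<^sup>*\<^sup>* j i" using reaches_back[OF j] by (simp add: R_def)
    moreover have "(trans_step K)\<^sup>*\<^sup>* i k" using k by (simp add: R_def)
    ultimately show "(trans_step K)\<^sup>*\<^sup>* j k" by simp
  qed
  thus ?thesis using R_subset[OF i] by blast
qed

lemma harmonic_max_attained_on_closed_irreducible:
  fixes K :: "real^'n^'n" and x :: "real^'n"
  assumes stoch: "stochastic_matrix K" and harmonic: "K *v x = x"
  shows "\<exists>C. closed_irreducible K C \<and> (\<forall>i\<in>C. \<forall>j. x$j \<le> x$i)"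
proof -
  define m where "m = Max (range (\<lambda>i. x$i))"
  have le_m: "x$j \<le> m" for j unfolding m_def by (rule Max_ge) auto
  have "m \<in> range (\<lambda>i. x$i)" unfolding m_def by (rule Max_in) auto
  define S where "S = {i. x$i = m}"
  have "closed_set K S"
    unfolding closed_set_def
  proof (intro conjI ballI allI impI)
    show "S \<noteq> {}" using \<open>m \<in> range (\<lambda>i. x$i)\<close> by (auto simp: S_def)
  next
    fix i j assume "i \<in> S" and step: "trans_step K i j"
    have "(\<Sum>k\<in>UNIV. K$i$k * (m - x$k)) = m * (\<Sum>k\<in>UNIV. K$i$k) - (K *v x)$i"
      by (simp add: matrix_vector_mult_def algebra_simps sum_subtractf sum_distrib_left)
    also have "\<dots> = 0"
      using stoch harmonic \<open>i \<in> S\<close> by (simp add: stochastic_matrix_def S_def)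
    finally have "\<forall>k\<in>UNIV. K$i$k * (m - x$k) = 0"
      by (subst sum_nonneg_eq_0_iff[symmetric])
         (use stoch le_m in \<open>auto simp: stochastic_matrix_def\<close>)
    hence "K$i$j * (m - x$j) = 0" by simp
    thus "j \<in> S" using step by (simp add: trans_step_def S_def)
  qed
  then obtain C where "C \<subseteq> S" "closed_irreducible K C"
    using closed_set_contains_closed_irreducible by blast
  thus ?thesis using le_m by (auto simp: S_def)
qed

lemma harmonic_vector_constant:
  fixes K :: "real^'n^'n" and x :: "real^'n"
  assumes stoch: "stochastic_matrix K" and uniq: "\<exists>!C. closed_irreducible K C"
    and harmonic: "K *v x = x"
  shows "\<exists>c. x = c *\<^sub>R vec 1"
proof -
  obtain C where C: "closed_irreducible K C" and max: "\<forall>i\<in>C. \<forall>j. x$j \<le> x$i"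
    using harmonic_max_attained_on_closed_irreducible[OF stoch harmonic] by blast
  obtain C' where C': "closed_irreducible K C'" and min: "\<forall>i\<in>C'. \<forall>j. x$i \<le> x$j"
    using harmonic_max_attained_on_closed_irreducible[OF stoch, of "-x"] harmonic
    by (auto simp: matrix_vector_mult_scaleR[of K "-1" x, simplified])
  obtain i where "i \<in> C" using C by (auto simp: closed_irreducible_def closed_set_def)
  have "C' = C" using uniq C C' by blast
  hence "x$j = x$i" for j
    using max min \<open>i \<in> C\<close> by (simp add: order_antisym)
  thus ?thesis by (auto simp: vec_eq_iff)
qed

lemma stochastic_matrix_mult_one:
  assumes "stochastic_matrix K"
  shows "K *v 1 = 1"
  using assms by (simp add: vec_eq_iff matrix_vector_mult_def stochastic_matrix_def)

lemma inner_pos_of_distribution: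
  fixes \<mu> q :: "real^'n"
  assumes "\<forall>i. 0 \<le> \<mu>$i" and "(\<Sum>i\<in>UNIV. \<mu>$i) = 1" and "\<forall>i. 0 < q$i"
  shows "0 < \<mu> \<bullet> q"
proof -
  obtain i where "\<mu>$i \<noteq> 0" using assms(2) by force
  hence "0 < \<mu>$i * q$i" using assms by (simp add: order_le_neq_trans)
  thus ?thesis unfolding inner_vec_def
    by (intro sum_pos2[of UNIV i]) (use assms in \<open>auto simp: less_imp_le\<close>)
qed

lemma diag_mat_mult_vec: "diag_mat v *v x = (\<chi> i. v$i * x$i)"
  by (simp add: vec_eq_iff diag_mat_def matrix_vector_mult_def if_distrib[of "\<lambda>a. a * _"] cong: if_cong)

lemma diag_mat_diff: "diag_mat (u - v) = diag_mat u - diag_mat v"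
  by (simp add: vec_eq_iff diag_mat_def)

lemma diag_mat_one: "diag_mat (vec 1) = mat 1"
  by (simp add: vec_eq_iff diag_mat_def mat_def)

lemma outer_prod_mult_vec: "outer_prod u v *v x = (v \<bullet> x) *\<^sub>R u"
  by (simp add: vec_eq_iff outer_prod_def matrix_vector_mult_def inner_vec_def
      sum_distrib_left algebra_simps)

lemma scaleR_outer_prod: "c *\<^sub>R outer_prod u v = outer_prod (c *\<^sub>R u) v"
  by (simp add: vec_eq_iff outer_prod_def)

lemma matrix_mult_matrix_inv:
  fixes A :: "'a::semiring_1^'n^'n"
  assumes "invertible A"
  shows "A ** matrix_inv A = mat 1"
  using assms unfolding invertible_def matrix_inv_def by (rule someI_ex[THEN conjunct1])

lemma stationary_inner_rank_one_perturbation: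
  fixes K :: "real^'n^'n"
  assumes "\<mu> v* K = \<mu>"
  shows "\<mu> \<bullet> ((mat 1 - K + outer_prod u a) *v x) = (\<mu> \<bullet> u) * (a \<bullet> x)"
proof -
  have "\<mu> \<bullet> (K *v x) = \<mu> \<bullet> x" by (metis assms dot_lmul_matrix)
  thus ?thesis
    by (simp add: matrix_vector_mult_diff_rdistrib matrix_vector_mult_add_rdistrib
        outer_prod_mult_vec inner_diff_right inner_add_right)
qed

lemma invertible_rank_one_perturbation:
  fixes K :: "real^'n^'n"
  assumes harmonic_const: "\<And>x. K *v x = x \<Longrightarrow> \<exists>c. x = c *\<^sub>R vec 1"
    and stat: "\<mu> v* K = \<mu>" and "\<mu> \<bullet> u \<noteq> 0" and "a \<bullet> vec 1 \<noteq> 0"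
  shows "invertible (mat 1 - K + outer_prod u a)"
proof -
  let ?M = "mat 1 - K + outer_prod u a"
  have "x = 0" if Mx: "?M *v x = 0" for x
  proof -
    have "a \<bullet> x = 0"
      using stationary_inner_rank_one_perturbation[OF stat, of u a x] Mx \<open>\<mu> \<bullet> u \<noteq> 0\<close> by simp
    hence "K *v x = x" using Mx
      by (simp add: matrix_vector_mult_diff_rdistrib matrix_vector_mult_add_rdistrib
          outer_prod_mult_vec)
    then obtain c where x: "x = c *\<^sub>R vec 1" using harmonic_const by blast
    hence "c * (a \<bullet> vec 1) = 0" using \<open>a \<bullet> x = 0\<close> by simp
    thus "x = 0" using x \<open>a \<bullet> vec 1 \<noteq> 0\<close> by simp
  qed
  thus ?thesis using matrix_left_invertible_ker invertible_left_inverse by blast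
qed

lemma stationary_mult_diag_complement:
  fixes K :: "real^'n^'n"
  assumes "\<mu> v* K = \<mu>"
  shows "\<mu> v* (diag_mat (vec 1 - p) ** K) = \<mu> v* (mat 1 - diag_mat p ** K)"
proof -
  have "\<mu> v* (diag_mat (vec 1 - p) ** K) = (\<mu> - \<mu> v* diag_mat p) v* K"
    unfolding diag_mat_diff diag_mat_one
    by (simp add: vector_matrix_mul_assoc[symmetric] vector_matrix_mult_diff_rdistrib)
  also have "\<dots> = \<mu> v* (mat 1 - diag_mat p ** K)"
    using assms by (simp add: vector_matrix_mult_diff_distrib vector_matrix_mult_diff_rdistrib
        vector_matrix_mul_assoc)
  finally show ?thesis .
qed

theorem corollary3p4:
  fixes K :: "real^'n^'n" and p \<mu> :: "real^'n"
    and pbar lam :: real and \<pi> r :: "real^'n" and M :: "real^'n^'n"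
  assumes stoch: "stochastic_matrix K"
    and uniq: "\<exists>!C. closed_irreducible K C"
    and stat: "stationary_distribution K \<mu>"
    and p_range: "\<forall>i. 0 < p$i \<and> p$i < 1"
  defines "pbar \<equiv> \<mu> \<bullet> p"
    and "lam \<equiv> pbar / (1 - pbar)"
    and "\<pi> \<equiv> (1 + lam) *\<^sub>R (\<mu> v* (mat 1 - diag_mat p ** K))"
    and "M \<equiv> mat 1 - K + (1 / (1 - pbar)) *\<^sub>R
               outer_prod (vec 1 - p) (\<mu> v* (diag_mat (vec 1 - p) ** K))"
    and "r \<equiv> matrix_inv M *v p - lam *\<^sub>R vec 1"
  shows "invertible M \<and> \<pi> \<bullet> r = 0"
proof -
  define u where "u = (1 / (1 - pbar)) *\<^sub>R (vec 1 - p)"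
  define a where "a = \<mu> v* (mat 1 - diag_mat p ** K)"
  have \<mu>K: "\<mu> v* K = \<mu>" and \<mu>_one: "\<mu> \<bullet> 1 = 1"
    using stat by (simp_all add: stationary_distribution_def inner_vec_def)
  have "0 < \<mu> \<bullet> (vec 1 - p)"
    using stat p_range by (intro inner_pos_of_distribution) (auto simp: stationary_distribution_def)
  hence pbar_lt_1: "pbar < 1" by (simp add: inner_diff_right \<mu>_one pbar_def)
  have M_eq: "M = mat 1 - K + outer_prod u a"
    unfolding M_def stationary_mult_diag_complement[OF \<mu>K] by (simp add: u_def a_def scaleR_outer_prod)
  have \<mu>u: "\<mu> \<bullet> u = 1" using pbar_lt_1 by (simp add: u_def inner_diff_right \<mu>_one pbar_def)
  have "diag_mat p *v 1 = p" by (simp add: diag_mat_mult_vec vec_eq_iff)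
  hence a_one: "a \<bullet> 1 = 1 - pbar"
    by (simp add: a_def dot_lmul_matrix matrix_vector_mult_diff_rdistrib
        matrix_vector_mul_assoc[symmetric] stochastic_matrix_mult_one[OF stoch] inner_diff_right \<mu>_one pbar_def)
  have inv: "invertible M"
    unfolding M_eq using pbar_lt_1 a_one \<mu>u
    by (intro invertible_rank_one_perturbation[OF _ \<mu>K] harmonic_vector_constant[OF stoch uniq]) auto
  define y where "y = matrix_inv M *v p"
  have "M *v y = p" by (simp add: y_def matrix_vector_mul_assoc matrix_mult_matrix_inv[OF inv])
  hence a_y: "a \<bullet> y = pbar"
    using stationary_inner_rank_one_perturbation[OF \<mu>K, of u a y] by (simp add: M_eq \<mu>u pbar_def)
  have "\<pi> \<bullet> r = (1 + lam) * (a \<bullet> y - lam * (a \<bullet> 1))"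
    by (simp add: \<pi>_def r_def a_def[symmetric] y_def[symmetric] inner_diff_right right_diff_distrib)
  also have "\<dots> = (1 + lam) * (pbar - lam * (1 - pbar))" by (simp add: a_y a_one)
  also have "\<dots> = 0" using pbar_lt_1 by (simp add: lam_def)
  finally show ?thesis using inv by simp
qed

end
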